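(* Let $\xi$ be a Hopf vector field on the unit sphere $S^{n+1}$, $n=2m$. For arbitrary vector fields $X,Y$ on $S^{n+1}$ put $Y^\perp=Y-\langle\xi,Y\rangle\xi$. Then, along $\xi(S^{n+1})\subset T_1S^{n+1}$, $$\bar\nabla_{X_\xi^\tau}Y_\xi^\nu=(\nabla_XY^\perp)_\xi^\nu-\tfrac12\langle\xi,X\rangle (A_\xi Y^\perp)_\xi^\nu,$$ where $\bar\nabla$ is the Levi-Civita connection of $T_1S^{n+1}$.
   Context: A Hopf vector field on $S^{2m+1}\subset\mathbb R^{2m+2}$ is $\xi(x)=Jx$ for an orthogonal complex structure $J$ on $\mathbb R^{2m+2}$. $\nabla$ is the Levi-Civita connection of $S^{n+1}$, $A_\xi X=-\nabla_X\xi$, $A_\xi^*$ its pointwise adjoint. $T_1S^{n+1}$ carries the metric induced from the Sasaki metric $\langle\langle \tilde X,\tilde Y\rangle\rangle=\langle \pi_*\tilde X,\pi_*\tilde Y\rangle+\langle K\tilde X,K\tilde Y\rangle$ on $TS^{n+1}$. At points of $\xi(S^{n+1})$, $X^h,X^v$ are horizontal and vertical lifts, the tangential lift is $X^t=X^v-\langle X,\xi\rangle\xi^v$, the $\xi$-tangential lift is $X_\xi^\tau=X^h-(A_\xi X)^t$ (tangent to $\xi(S^{n+1})$) and the $\xi$-normal lift is $Y_\xi^\nu=(A_\xi^*Y)^h+Y^t$ (normal to $\xi(S^{n+1})$ in $T_1S^{n+1}$). *)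

theory Defs
  imports "HOL-Analysis.Analysis"
begin

coinductive smooth :: "('a::real_normed_vector \<Rightarrow> 'b::real_normed_vector) \<Rightarrow> bool" where
  "(\<forall>x. f differentiable (at x)) \<Longrightarrow> (\<forall>v. smooth (\<lambda>x. frechet_derivative f (at x) v)) \<Longrightarrow> smooth f"

definition dd :: "('a::real_normed_vector \<Rightarrow> 'b::real_normed_vector) \<Rightarrow> 'a \<Rightarrow> 'a \<Rightarrow> 'b" where
  "dd f x v = frechet_derivative f (at x) v"

definition tanp :: "'a::real_inner \<Rightarrow> 'a \<Rightarrow> 'a" where
  "tanp x w = w - (w \<bullet> x) *\<^sub>R x"

(* Levi-Civita connection of the round unit sphere (Gauss formula) *)
definition nabla :: "('a::euclidean_space \<Rightarrow> 'a) \<Rightarrow> ('a \<Rightarrow> 'a) \<Rightarrow> 'a \<Rightarrow> 'a" where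
  "nabla X Y x = tanp x (dd Y x (X x))"

(* A_xi X = - nabla_X xi, for the Hopf field xi(x) = J x *)
definition Aop :: "('a::euclidean_space \<Rightarrow> 'a) \<Rightarrow> ('a \<Rightarrow> 'a) \<Rightarrow> 'a \<Rightarrow> 'a" where
  "Aop J X x = - nabla X (\<lambda>y. J y) x"

definition Astar :: "('a::euclidean_space \<Rightarrow> 'a) \<Rightarrow> 'a \<Rightarrow> 'a \<Rightarrow> 'a" where
  "Astar J x w = (THE u. u \<bullet> x = 0 \<and>
      (\<forall>v. v \<bullet> x = 0 \<longrightarrow> Aop J (\<lambda>_. v) x \<bullet> w = v \<bullet> u))"

definition perp :: "('a::euclidean_space \<Rightarrow> 'a) \<Rightarrow> ('a \<Rightarrow> 'a) \<Rightarrow> 'a \<Rightarrow> 'a" where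
  "perp J Y y = Y y - (J y \<bullet> Y y) *\<^sub>R J y"

(* TS^{n+1} = {(x,v). |x|=1, v.x=0} inside 'a x 'a; tangent spaces *)
definition TTS :: "'a::euclidean_space \<times> 'a \<Rightarrow> ('a \<times> 'a) set" where
  "TTS p = {w. fst w \<bullet> fst p = 0 \<and> fst w \<bullet> snd p + snd w \<bullet> fst p = 0}"

definition T1S :: "('a::euclidean_space \<times> 'a) set" where
  "T1S = {p. norm (fst p) = 1 \<and> norm (snd p) = 1 \<and> fst p \<bullet> snd p = 0}"

definition TT1S :: "'a::euclidean_space \<times> 'a \<Rightarrow> ('a \<times> 'a) set" where
  "TT1S p = {w \<in> TTS p. snd w \<bullet> snd p = 0}"

(* connection map K at p=(x,v): K(a,b) = covariant derivative = tangential part of b *)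
definition Kmap :: "'a::euclidean_space \<times> 'a \<Rightarrow> 'a \<times> 'a \<Rightarrow> 'a" where
  "Kmap p w = tanp (fst p) (snd w)"

(* Sasaki metric: <pi_* w, pi_* w'> + <K w, K w'>, pi_* = fst *)
definition sasaki :: "'a::euclidean_space \<times> 'a \<Rightarrow> 'a \<times> 'a \<Rightarrow> 'a \<times> 'a \<Rightarrow> real" where
  "sasaki p w w' = fst w \<bullet> fst w' + Kmap p w \<bullet> Kmap p w'"

definition hlift :: "'a::euclidean_space \<times> 'a \<Rightarrow> 'a \<Rightarrow> 'a \<times> 'a" where
  "hlift p X = (THE w. w \<in> TTS p \<and> fst w = X \<and> Kmap p w = 0)"

definition vlift :: "'a::euclidean_space \<times> 'a \<Rightarrow> 'a \<Rightarrow> 'a \<times> 'a" where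
  "vlift p X = (THE w. w \<in> TTS p \<and> fst w = 0 \<and> Kmap p w = X)"

definition pt :: "('a::euclidean_space \<Rightarrow> 'a) \<Rightarrow> 'a \<Rightarrow> 'a \<times> 'a" where
  "pt J x = (x, J x)"

definition tlift :: "('a::euclidean_space \<Rightarrow> 'a) \<Rightarrow> 'a \<Rightarrow> 'a \<Rightarrow> 'a \<times> 'a" where
  "tlift J x X = vlift (pt J x) X - (X \<bullet> J x) *\<^sub>R vlift (pt J x) (J x)"

definition tau_lift :: "('a::euclidean_space \<Rightarrow> 'a) \<Rightarrow> ('a \<Rightarrow> 'a) \<Rightarrow> 'a \<Rightarrow> 'a \<times> 'a" where
  "tau_lift J X x = hlift (pt J x) (X x) - tlift J x (Aop J X x)"

definition nu_lift :: "('a::euclidean_space \<Rightarrow> 'a) \<Rightarrow> ('a \<Rightarrow> 'a) \<Rightarrow> 'a \<Rightarrow> 'a \<times> 'a" where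
  "nu_lift J Y x = hlift (pt J x) (Astar J x (Y x)) + tlift J x (Y x)"

definition bracket :: "('b::euclidean_space \<Rightarrow> 'b) \<Rightarrow> ('b \<Rightarrow> 'b) \<Rightarrow> 'b \<Rightarrow> 'b" where
  "bracket U W q = dd W q (U q) - dd U q (W q)"

(* Levi-Civita connection of (T_1 S, Sasaki metric), via the Koszul formula;
   vector fields on T_1 S are smooth ambient fields tangent to T_1 S along T_1 S *)
definition LCT1 :: "('a::euclidean_space \<times> 'a \<Rightarrow> 'a \<times> 'a) \<Rightarrow> ('a \<times> 'a \<Rightarrow> 'a \<times> 'a)
                    \<Rightarrow> 'a \<times> 'a \<Rightarrow> 'a \<times> 'a" where
  "LCT1 U W q = (THE w. w \<in> TT1S q \<and>
     (\<forall>Z. smooth Z \<and> (\<forall>p\<in>T1S. Z p \<in> TT1S p) \<longrightarrow>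
        2 * sasaki q w (Z q) =
          dd (\<lambda>p. sasaki p (W p) (Z p)) q (U q)
        + dd (\<lambda>p. sasaki p (U p) (Z p)) q (W q)
        - dd (\<lambda>p. sasaki p (U p) (W p)) q (Z q)
        + sasaki q (bracket U W q) (Z q)
        - sasaki q (bracket U Z q) (W q)
        - sasaki q (bracket W Z q) (U q)))"

end

(*
  Along the section xi(S) both lifts are explicit in the ambient coordinates of
  T1S, a subset of R^(2m+2) x R^(2m+2): X^tau = (X, J X) and Y^nu = (J Y', Y') with
  Y' = Y^perp.  The Levi-Civita connection of T1S is determined by the Koszul formula,
  because the Sasaki metric is definite on tangent vectors and every tangent vector
  of T1S is the value of a smooth tangent field (an infinitesimal rotation).
  As W = (J Y', Y') along xi(S), differentiating along the sphere gives
  W_*(X^tau) = (J D, D) with D the ambient derivative of Y' in direction X, and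
  differentiating <Y', x> = 0 gives <D, x> = - <X, Y'>.  Expanding the Koszul formula
  with the derivative of the Sasaki metric then reduces the claim to an algebraic
  identity at the point xi(x).
*)

theory Submission
  imports Defs
begin

section \<open>The Sasaki metric and the Koszul formula on the unit tangent bundle\<close>

lemma smooth_differentiable: "smooth f \<Longrightarrow> f differentiable (at x)"
  by (erule smooth.cases) auto

lemma smooth_const: "smooth (\<lambda>_. c)"
  by (coinduction arbitrary: c rule: smooth.coinduct) (auto simp: frechet_derivative_const)

lemma smooth_bounded_linear:
  assumes "bounded_linear f"
  shows "smooth f"
proof (rule smooth.intros)
  have "frechet_derivative f (at x) = f" for x
    using frechet_derivative_at[OF bounded_linear_imp_has_derivative[OF assms]] by simp
  then show "\<forall>v. smooth (\<lambda>x. frechet_derivative f (at x) v)"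
    by (simp add: smooth_const)
qed (use assms bounded_linear_imp_differentiable in blast)

definition dKmap :: "'a::euclidean_space \<times> 'a \<Rightarrow> 'a \<times> 'a \<Rightarrow> 'a \<times> 'a \<Rightarrow> 'a" where
  "dKmap q h w = - (snd w \<bullet> fst h) *\<^sub>R fst q - (snd w \<bullet> fst q) *\<^sub>R fst h"

definition dsasaki :: "'a::euclidean_space \<times> 'a \<Rightarrow> 'a \<times> 'a \<Rightarrow> 'a \<times> 'a \<Rightarrow> 'a \<times> 'a \<Rightarrow> real" where
  "dsasaki q h w w' = dKmap q h w \<bullet> Kmap q w' + Kmap q w \<bullet> dKmap q h w'"

lemma Kmap_has_derivative:
  assumes "(F has_derivative F') (at q)"
  shows "((\<lambda>p. Kmap p (F p)) has_derivative (\<lambda>h. Kmap q (F' h) + dKmap q h (F q))) (at q)"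
  unfolding Kmap_def tanp_def dKmap_def
  by (rule derivative_eq_intros assms refl | simp)+ (auto simp: algebra_simps inner_commute)

lemma sasaki_has_derivative:
  assumes F: "(F has_derivative F') (at q)" and G: "(G has_derivative G') (at q)"
  shows "((\<lambda>p. sasaki p (F p) (G p)) has_derivative
     (\<lambda>h. sasaki q (F' h) (G q) + sasaki q (F q) (G' h) + dsasaki q h (F q) (G q))) (at q)"
  unfolding sasaki_def dsasaki_def
  by (rule derivative_eq_intros Kmap_has_derivative F G refl | simp)+
    (simp add: inner_add_left inner_add_right algebra_simps)

lemma sasaki_commute: "sasaki q a b = sasaki q b a"
  by (simp add: sasaki_def inner_commute)

lemma sasaki_diff_left: "sasaki q (a - b) c = sasaki q a c - sasaki q b c"
  by (simp add: sasaki_def Kmap_def tanp_def inner_diff_left inner_diff_right algebra_simps)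

definition koszul_form :: "('a::euclidean_space \<times> 'a \<Rightarrow> 'a \<times> 'a) \<Rightarrow> ('a \<times> 'a \<Rightarrow> 'a \<times> 'a)
    \<Rightarrow> ('a \<times> 'a \<Rightarrow> 'a \<times> 'a) \<Rightarrow> 'a \<times> 'a \<Rightarrow> real" where
  "koszul_form U W Z q =
          dd (\<lambda>p. sasaki p (W p) (Z p)) q (U q)
        + dd (\<lambda>p. sasaki p (U p) (Z p)) q (W q)
        - dd (\<lambda>p. sasaki p (U p) (W p)) q (Z q)
        + sasaki q (bracket U W q) (Z q)
        - sasaki q (bracket U Z q) (W q)
        - sasaki q (bracket W Z q) (U q)"

lemma LCT1_eq_The_koszul_form:
  "LCT1 U W q = (THE w. w \<in> TT1S q \<and>
     (\<forall>Z. smooth Z \<and> (\<forall>p\<in>T1S. Z p \<in> TT1S p) \<longrightarrow> 2 * sasaki q w (Z q) = koszul_form U W Z q))"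
  by (simp add: LCT1_def koszul_form_def)

lemma dd_eq_derivative: "(f has_derivative f') (at x) \<Longrightarrow> dd f x v = f' v"
  by (simp add: dd_def frechet_derivative_at[symmetric])

lemma koszul_form_eq:
  assumes U: "(U has_derivative U') (at q)" and W: "(W has_derivative W') (at q)"
    and Z: "(Z has_derivative Z') (at q)"
  shows "koszul_form U W Z q = 2 * sasaki q (W' (U q)) (Z q)
     + dsasaki q (U q) (W q) (Z q) + dsasaki q (W q) (U q) (Z q) - dsasaki q (Z q) (U q) (W q)"
  unfolding koszul_form_def bracket_def sasaki_diff_left
    dd_eq_derivative[OF U] dd_eq_derivative[OF W] dd_eq_derivative[OF Z]
    dd_eq_derivative[OF sasaki_has_derivative[OF U W]] dd_eq_derivative[OF sasaki_has_derivative[OF U Z]]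
    dd_eq_derivative[OF sasaki_has_derivative[OF W Z]]
  using sasaki_commute[of q "W q" "Z' (U q)"] sasaki_commute[of q "U q" "Z' (W q)"]
    sasaki_commute[of q "U' (Z q)" "W q"] sasaki_commute[of q "U q" "W' (Z q)"]
    sasaki_commute[of q "U' (W q)" "Z q"]
  by linarith

lemma subspace_TT1S: "subspace (TT1S p)"
  by (rule subspaceI) (auto simp: TT1S_def TTS_def inner_add_left algebra_simps simp flip: distrib_left)

lemma sasaki_self_eq_0:
  assumes "d \<in> TTS q" "sasaki q d d = 0"
  shows "d = 0"
proof -
  have "fst d \<bullet> fst d + Kmap q d \<bullet> Kmap q d = 0"
    using assms(2) by (simp add: sasaki_def)
  then have "fst d = 0" "Kmap q d = 0"
    by (smt (verit) inner_eq_zero_iff inner_ge_zero)+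
  moreover have "snd d \<bullet> fst q = 0"
    using assms(1) \<open>fst d = 0\<close> by (simp add: TTS_def)
  ultimately show "d = 0"
    by (simp add: Kmap_def tanp_def inner_commute prod_eq_iff)
qed

lemma skew_map_extension:
  fixes x v a b :: "'a::real_inner"
  assumes "x \<bullet> x = 1" "v \<bullet> v = 1" "x \<bullet> v = 0" "a \<bullet> x = 0" "b \<bullet> v = 0" "a \<bullet> v + b \<bullet> x = 0"
  shows "\<exists>S. linear S \<and> (\<forall>y z. S y \<bullet> z = - (S z \<bullet> y)) \<and> S x = a \<and> S v = b"
proof (intro exI conjI allI)
  define S where "S y = (x \<bullet> y) *\<^sub>R a - (a \<bullet> y) *\<^sub>R x + (v \<bullet> y) *\<^sub>R b - (b \<bullet> y) *\<^sub>R v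
     - (b \<bullet> x) *\<^sub>R ((v \<bullet> y) *\<^sub>R x - (x \<bullet> y) *\<^sub>R v)" for y
  show "linear S"
    by (rule linearI) (simp_all add: S_def inner_add_right algebra_simps)
  show "S y \<bullet> z = - (S z \<bullet> y)" for y z
    by (simp add: S_def inner_add_left inner_diff_left inner_commute algebra_simps)
  show "S x = a" "S v = b"
    using assms by (simp_all add: S_def inner_commute algebra_simps flip: scaleR_add_left)
qed

lemma exists_tangent_field:
  assumes "q \<in> T1S" "d \<in> TT1S q"
  obtains Z where "smooth Z" "\<forall>p\<in>T1S. Z p \<in> TT1S p" "Z q = d"
proof -
  have "fst q \<bullet> fst q = 1" "snd q \<bullet> snd q = 1" "fst q \<bullet> snd q = 0"
    using assms(1) by (auto simp: T1S_def norm_eq_1)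
  moreover have "fst d \<bullet> fst q = 0" "snd d \<bullet> snd q = 0" "fst d \<bullet> snd q + snd d \<bullet> fst q = 0"
    using assms(2) by (auto simp: TT1S_def TTS_def)
  ultimately obtain S where S: "linear S" "\<And>y z. S y \<bullet> z = - (S z \<bullet> y)"
      and Sq: "S (fst q) = fst d" "S (snd q) = snd d"
    using skew_map_extension[of "fst q" "snd q" "fst d" "snd d"] by blast
  \<comment> \<open>the infinitesimal rotation generated by \<open>S\<close>; skewness makes it tangent to \<open>T1S\<close>\<close>
  define Z where "Z p = (S (fst p), S (snd p))" for p
  have "linear Z"
    unfolding Z_def using S(1) by (intro linearI) (simp_all add: linear_add linear_scale)
  then have "smooth Z"
    by (simp add: smooth_bounded_linear linear_conv_bounded_linear)
  moreover have "Z p \<in> TT1S p" for p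
  proof -
    have "S y \<bullet> y = 0" for y
      using S(2)[of y y] by simp
    then show ?thesis
      using S(2)[of "fst p" "snd p"] by (simp add: Z_def TT1S_def TTS_def)
  qed
  moreover have "Z q = d"
    by (simp add: Z_def Sq)
  ultimately show ?thesis
    using that by blast
qed

lemma LCT1_eqI:
  assumes q: "q \<in> T1S" and w: "w \<in> TT1S q"
    and koszul: "\<And>Z. smooth Z \<Longrightarrow> \<forall>p\<in>T1S. Z p \<in> TT1S p \<Longrightarrow>
      2 * sasaki q w (Z q) = koszul_form U W Z q"
  shows "LCT1 U W q = w"
  unfolding LCT1_eq_The_koszul_form
proof (rule the_equality)
  fix w' assume w': "w' \<in> TT1S q \<and> (\<forall>Z. smooth Z \<and> (\<forall>p\<in>T1S. Z p \<in> TT1S p) \<longrightarrow>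
      2 * sasaki q w' (Z q) = koszul_form U W Z q)"
  then have d: "w' - w \<in> TT1S q"
    using w by (simp add: subspace_diff[OF subspace_TT1S])
  then obtain Z where Z: "smooth Z" "\<forall>p\<in>T1S. Z p \<in> TT1S p" and "Z q = w' - w"
    using exists_tangent_field[OF q] by blast
  have "2 * sasaki q w' (Z q) = 2 * sasaki q w (Z q)"
    using w' koszul[OF Z] Z by simp
  then have "sasaki q (w' - w) (w' - w) = 0"
    by (simp add: sasaki_diff_left \<open>Z q = w' - w\<close>)
  with d show "w' = w"
    using sasaki_self_eq_0[of "w' - w" q] by (simp add: TT1S_def)
qed (use w koszul in blast)

section \<open>Derivatives along the unit sphere\<close>

lemma sphere_curve_through:
  fixes x v :: "'a::real_inner"
  assumes "norm x = 1" "v \<bullet> x = 0"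
  obtains \<gamma> where "\<gamma> 0 = x" "\<And>t. \<gamma> t \<in> sphere 0 1" "(\<gamma> has_derivative (\<lambda>t. t *\<^sub>R v)) (at 0)"
proof
  define \<gamma> where "\<gamma> t = inverse (sqrt (1 + t\<^sup>2 * (v \<bullet> v))) *\<^sub>R (x + t *\<^sub>R v)" for t
  show "\<gamma> 0 = x"
    by (simp add: \<gamma>_def)
  show "(\<gamma> has_derivative (\<lambda>t. t *\<^sub>R v)) (at 0)"
    unfolding \<gamma>_def by (auto intro!: derivative_eq_intros add_pos_nonneg)
  fix t
  have "norm (x + t *\<^sub>R v) = sqrt (1 + t\<^sup>2 * (v \<bullet> v))"
    using assms by (simp add: norm_eq_sqrt_inner inner_add_left inner_add_right inner_commute power2_eq_square)
  moreover have "sqrt (1 + t\<^sup>2 * (v \<bullet> v)) > 0"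
    by (simp add: add_pos_nonneg)
  ultimately show "\<gamma> t \<in> sphere 0 1"
    by (simp add: \<gamma>_def)
qed

lemma has_derivative_eq_on_sphere:
  fixes f g :: "'a::real_inner \<Rightarrow> 'b::real_normed_vector"
  assumes "(f has_derivative f') (at x)" "(g has_derivative g') (at x)"
    and "\<And>z. z \<in> sphere 0 1 \<Longrightarrow> f z = g z" and "norm x = 1" "v \<bullet> x = 0"
  shows "f' v = g' v"
proof -
  obtain \<gamma> where \<gamma>: "\<gamma> 0 = x" "\<And>t. \<gamma> t \<in> sphere 0 1" "(\<gamma> has_derivative (\<lambda>t. t *\<^sub>R v)) (at 0)"
    using sphere_curve_through[OF assms(4,5)] by blast
  have "((\<lambda>t. f (\<gamma> t)) has_derivative (\<lambda>t. f' (t *\<^sub>R v))) (at 0)"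
    using has_derivative_compose[OF \<gamma>(3)] assms(1) \<gamma>(1) by simp
  moreover have "((\<lambda>t. f (\<gamma> t)) has_derivative (\<lambda>t. g' (t *\<^sub>R v))) (at 0)"
    using has_derivative_compose[OF \<gamma>(3)] assms(2,3) \<gamma>(1,2) by simp
  ultimately show ?thesis
    using has_derivative_unique fun_cong[of _ _ 1] by (metis scaleR_one)
qed

section \<open>Lifts along a Hopf vector field\<close>

lemma hlift_eq:
  assumes "x \<bullet> x = 1" "a \<bullet> x = 0"
  shows "hlift (x, v) a = (a, - (a \<bullet> v) *\<^sub>R x)"
  unfolding hlift_def
proof (rule the_equality)
  show "(a, - (a \<bullet> v) *\<^sub>R x) \<in> TTS (x, v) \<and> fst (a, - (a \<bullet> v) *\<^sub>R x) = a
      \<and> Kmap (x, v) (a, - (a \<bullet> v) *\<^sub>R x) = 0"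
    using assms by (simp add: TTS_def Kmap_def tanp_def)
next
  fix w assume w: "w \<in> TTS (x, v) \<and> fst w = a \<and> Kmap (x, v) w = 0"
  then have "snd w = (snd w \<bullet> x) *\<^sub>R x" and "snd w \<bullet> x = - (a \<bullet> v)"
    by (auto simp: Kmap_def tanp_def TTS_def)
  with w show "w = (a, - (a \<bullet> v) *\<^sub>R x)"
    by (metis prod.collapse)
qed

lemma vlift_eq:
  assumes "c \<bullet> x = 0"
  shows "vlift (x, v) c = (0, c)"
  unfolding vlift_def
  by (rule the_equality) (use assms in \<open>auto simp: TTS_def Kmap_def tanp_def\<close>)

locale complex_structure =
  fixes J :: "'a::euclidean_space \<Rightarrow> 'a"
  assumes orthogonal: "orthogonal_transformation J" and J_J [simp]: "\<And>z. J (J z) = - z"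
begin

sublocale J: bounded_linear J
  using orthogonal by (simp add: orthogonal_transformation_def linear_conv_bounded_linear)

declare J.add [simp] J.diff [simp] J.neg [simp] J.scaleR [simp] J.zero [simp]

lemma inner_J_J [simp]: "J a \<bullet> J b = a \<bullet> b"
  using orthogonal by (simp add: orthogonal_transformation_def)

lemma norm_J [simp]: "norm (J a) = norm a"
  by (simp add: norm_eq_sqrt_inner)

lemma inner_J_right: "a \<bullet> J b = - (J a \<bullet> b)"
  by (metis J_J inner_J_J inner_minus_right)

lemma inner_J_left: "J a \<bullet> b = - (a \<bullet> J b)"
  by (simp add: inner_J_right)

lemma inner_J_swap: "J a \<bullet> b = - (J b \<bullet> a)"
  by (simp add: inner_J_left inner_commute[of a])

lemma inner_J_self [simp]: "J a \<bullet> a = 0" "a \<bullet> J a = 0"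
  using inner_J_right[of a a] by (auto simp: inner_commute)

lemma Aop_eq: "Aop J X x = - tanp x (J (X x))"
  using frechet_derivative_at[OF bounded_linear_imp_has_derivative[OF J.bounded_linear_axioms]]
  by (simp add: Aop_def nabla_def dd_def)

lemma Astar_eq:
  assumes "x \<bullet> x = 1"
  shows "Astar J x w = J w - (J w \<bullet> x) *\<^sub>R x - (x \<bullet> w) *\<^sub>R J x"
  unfolding Astar_def
proof (rule the_equality)
  let ?u = "J w - (J w \<bullet> x) *\<^sub>R x - (x \<bullet> w) *\<^sub>R J x"
  have adjoint: "Aop J (\<lambda>_. v) x \<bullet> w = v \<bullet> ?u" if "v \<bullet> x = 0" for v
    using assms that
    by (simp add: Aop_eq tanp_def inner_diff_left inner_diff_right inner_J_right inner_J_left[of x v]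
        inner_J_left[of w v] inner_commute[of x w] algebra_simps)
  show "?u \<bullet> x = 0 \<and> (\<forall>v. v \<bullet> x = 0 \<longrightarrow> Aop J (\<lambda>_. v) x \<bullet> w = v \<bullet> ?u)"
    using assms adjoint by (simp add: inner_diff_left)
  fix u assume u: "u \<bullet> x = 0 \<and> (\<forall>v. v \<bullet> x = 0 \<longrightarrow> Aop J (\<lambda>_. v) x \<bullet> w = v \<bullet> u)"
  have "(u - ?u) \<bullet> x = 0"
    using u assms by (simp add: inner_diff_left)
  with u adjoint have "(u - ?u) \<bullet> (u - ?u) = 0"
    by (simp add: inner_diff_right)
  then show "u = ?u" by simp
qed

lemma perp_orthogonal:
  assumes "x \<bullet> x = 1"
  shows "perp J Y x \<bullet> J x = 0" "perp J Y x \<bullet> x = Y x \<bullet> x"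
  using assms by (simp_all add: perp_def inner_diff_left inner_commute[of "Y x" "J x"])

lemma tau_lift_eq:
  assumes "x \<bullet> x = 1" "X x \<bullet> x = 0"
  shows "tau_lift J X x = (X x, J (X x))"
proof -
  have "Aop J X x \<bullet> x = 0" "Aop J X x \<bullet> J x = 0"
    using assms by (simp_all add: Aop_eq tanp_def inner_diff_left inner_J_left[of "X x" x])
  with assms show ?thesis
    by (simp add: tau_lift_def tlift_def pt_def hlift_eq vlift_eq Aop_eq tanp_def inner_J_left[of "X x" x])
qed

lemma nu_lift_eq:
  assumes "x \<bullet> x = 1" "Y x \<bullet> x = 0"
  shows "nu_lift J Y x = (J (perp J Y x), perp J Y x)"
proof -
  note JY = inner_J_swap[of "Y x" x]
  have "Astar J x (Y x) = J (perp J Y x)"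
    using assms by (simp add: Astar_eq perp_def JY inner_commute[of x "Y x"])
  moreover have "J (perp J Y x) \<bullet> x = 0" "J (perp J Y x) \<bullet> J x = 0"
    using assms perp_orthogonal[OF assms(1), of Y] by (simp_all add: perp_def inner_add_left JY)
  ultimately show ?thesis
    using assms
    by (simp add: nu_lift_def tlift_def pt_def hlift_eq vlift_eq perp_def inner_commute[of "Y x" "J x"])
qed

lemma nu_lift_in_TT1S:
  assumes "x \<bullet> x = 1" "Y x \<bullet> x = 0"
  shows "nu_lift J Y x \<in> TT1S (pt J x)"
  using assms perp_orthogonal[OF assms(1), of Y]
  by (simp add: nu_lift_eq TT1S_def TTS_def pt_def inner_J_left)

lemma koszul_identity_at_hopf_point:
  assumes x: "x \<bullet> x = 1" and "Xv \<bullet> x = 0" "Yp \<bullet> x = 0" and Yp: "Yp \<bullet> J x = 0"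
    and "D \<bullet> x = - (Xv \<bullet> Yp)"
    and z: "z1 \<bullet> x = 0" "z1 \<bullet> J x + z2 \<bullet> x = 0" "z2 \<bullet> J x = 0"
  shows "2 * sasaki (pt J x) (nu_lift J (\<lambda>_. tanp x D) x
            - (1/2 * (J x \<bullet> Xv)) *\<^sub>R nu_lift J (\<lambda>_. Aop J (\<lambda>_. Yp) x) x) (z1, z2)
       = 2 * sasaki (pt J x) (J D, D) (z1, z2) + dsasaki (pt J x) (Xv, J Xv) (J Yp, Yp) (z1, z2)
         + dsasaki (pt J x) (J Yp, Yp) (Xv, J Xv) (z1, z2)
         - dsasaki (pt J x) (z1, z2) (Xv, J Xv) (J Yp, Yp)"
proof -
  have nu: "nu_lift J (\<lambda>_. V) x = (J (V - (V \<bullet> J x) *\<^sub>R J x), V - (V \<bullet> J x) *\<^sub>R J x)"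
    if "V \<bullet> x = 0" for V
    using nu_lift_eq[of x "\<lambda>_. V"] x that by (simp add: perp_def inner_commute)
  have "tanp x D \<bullet> x = 0" "Aop J (\<lambda>_. Yp) x \<bullet> x = 0"
    using x by (simp_all add: Aop_eq tanp_def inner_diff_left)
  moreover have "J x \<bullet> Yp = 0" "J x \<bullet> z2 = 0" "z2 \<bullet> x = - (J x \<bullet> z1)"
    using Yp z by (simp_all add: inner_commute)
  ultimately show ?thesis
    using assms
    by (simp add: nu pt_def Aop_eq sasaki_def dsasaki_def dKmap_def Kmap_def tanp_def
        inner_add_left inner_add_right inner_diff_left inner_diff_right inner_J_right algebra_simps
        inner_J_swap[of Xv x] inner_J_swap[of z1 x] inner_J_swap[of D x] inner_J_swap[of Yp z2]
        inner_commute[of x z2] inner_commute[of Yp Xv] inner_commute[of z1 Yp] inner_commute[of x Yp]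
        inner_commute[of x z1])
qed

lemma perp_differentiable:
  assumes "Y differentiable (at x)"
  shows "perp J Y differentiable (at x)"
proof -
  obtain Y' where "(Y has_derivative Y') (at x)"
    using assms unfolding differentiable_def by blast
  then have "(perp J Y has_derivative
      (\<lambda>h. Y' h - (J h \<bullet> Y x + J x \<bullet> Y' h) *\<^sub>R J x - (J x \<bullet> Y x) *\<^sub>R J h)) (at x)"
    unfolding perp_def[abs_def]
    by (auto intro!: derivative_eq_intros J.has_derivative simp: algebra_simps)
  then show ?thesis
    unfolding differentiable_def by blast
qed

lemma has_derivative_pt: "(pt J has_derivative (\<lambda>h. (h, J h))) (at x)"
  unfolding pt_def[abs_def]
  by (auto intro!: derivative_eq_intros J.has_derivative)

lemma LCT1_at_hopf_point:
  assumes x: "norm x = 1" and Xv: "Xv \<bullet> x = 0" and Yp: "Yp \<bullet> x = 0" "Yp \<bullet> J x = 0"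
    and D: "D \<bullet> x = - (Xv \<bullet> Yp)"
    and U: "U differentiable (at (pt J x))" and W: "(W has_derivative W') (at (pt J x))"
    and Uq: "U (pt J x) = (Xv, J Xv)" and Wq: "W (pt J x) = (J Yp, Yp)"
    and W'U: "W' (Xv, J Xv) = (J D, D)"
  shows "LCT1 U W (pt J x) = nu_lift J (\<lambda>_. tanp x D) x
    - (1/2 * (J x \<bullet> Xv)) *\<^sub>R nu_lift J (\<lambda>_. Aop J (\<lambda>_. Yp) x) x"
proof (rule LCT1_eqI)
  have xx: "x \<bullet> x = 1"
    using x by (simp add: norm_eq_1)
  show "pt J x \<in> T1S"
    using x by (simp add: pt_def T1S_def)
  have "tanp x D \<bullet> x = 0" "Aop J (\<lambda>_. Yp) x \<bullet> x = 0"
    using xx by (simp_all add: Aop_eq tanp_def inner_diff_left)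
  then show "nu_lift J (\<lambda>_. tanp x D) x
      - (1/2 * (J x \<bullet> Xv)) *\<^sub>R nu_lift J (\<lambda>_. Aop J (\<lambda>_. Yp) x) x \<in> TT1S (pt J x)"
    using xx by (intro subspace_diff subspace_scale subspace_TT1S nu_lift_in_TT1S)
  fix Z :: "'a \<times> 'a \<Rightarrow> 'a \<times> 'a"
  assume Z: "smooth Z" "\<forall>p\<in>T1S. Z p \<in> TT1S p"
  obtain U' where U': "(U has_derivative U') (at (pt J x))"
    using U unfolding differentiable_def by blast
  obtain Z' where Z': "(Z has_derivative Z') (at (pt J x))"
    using smooth_differentiable[OF Z(1)] unfolding differentiable_def by blast
  obtain z1 z2 where Zq: "Z (pt J x) = (z1, z2)"
    and z: "z1 \<bullet> x = 0" "z1 \<bullet> J x + z2 \<bullet> x = 0" "z2 \<bullet> J x = 0"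
    using Z(2) \<open>pt J x \<in> T1S\<close> by (cases "Z (pt J x)") (auto simp: TT1S_def TTS_def pt_def)
  show "2 * sasaki (pt J x) (nu_lift J (\<lambda>_. tanp x D) x
      - (1/2 * (J x \<bullet> Xv)) *\<^sub>R nu_lift J (\<lambda>_. Aop J (\<lambda>_. Yp) x) x) (Z (pt J x))
    = koszul_form U W Z (pt J x)"
    unfolding koszul_form_eq[OF U' W Z'] Uq Wq W'U Zq
    by (rule koszul_identity_at_hopf_point[OF xx Xv Yp D z])
qed

end

theorem lemma5:
  fixes J :: "'a::euclidean_space \<Rightarrow> 'a" and X Y :: "'a \<Rightarrow> 'a"
    and U W :: "'a \<times> 'a \<Rightarrow> 'a \<times> 'a" and x :: 'a
  assumes "orthogonal_transformation J" and "\<forall>z. J (J z) = - z"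
    and "smooth X" and "smooth Y"
    and "\<forall>z\<in>sphere 0 1. X z \<bullet> z = 0" and "\<forall>z\<in>sphere 0 1. Y z \<bullet> z = 0"
    and "smooth U" and "smooth W"
    and "\<forall>p\<in>T1S. U p \<in> TT1S p" and "\<forall>p\<in>T1S. W p \<in> TT1S p"
    and "\<forall>z\<in>sphere 0 1. U (pt J z) = tau_lift J X z"
    and "\<forall>z\<in>sphere 0 1. W (pt J z) = nu_lift J Y z"
    and "x \<in> sphere 0 1"
  shows "LCT1 U W (pt J x) =
           nu_lift J (nabla X (perp J Y)) x
           - (1/2 * (J x \<bullet> X x)) *\<^sub>R nu_lift J (Aop J (perp J Y)) x"
proof -
  interpret complex_structure J
    using assms(1,2) by unfold_locales auto
  have x: "norm x = 1" "x \<bullet> x = 1" and Xx: "X x \<bullet> x = 0"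
    using assms(5,13) by (auto simp: norm_eq_1)
  define P where "P = perp J Y"
  have P_sphere: "P z \<bullet> z = 0" "P z \<bullet> J z = 0" if "z \<in> sphere 0 1" for z
    using that assms(6) perp_orthogonal[of z Y] by (simp_all add: P_def norm_eq_1)
  have W_sphere: "W (pt J z) = (J (P z), P z)" if "z \<in> sphere 0 1" for z
    using that assms(6,12) nu_lift_eq[of z Y] by (simp add: P_def norm_eq_1)
  obtain P' where P': "(P has_derivative P') (at x)"
    using perp_differentiable[OF smooth_differentiable[OF assms(4)]]
    unfolding P_def differentiable_def by blast
  obtain W' where W': "(W has_derivative W') (at (pt J x))"
    using smooth_differentiable[OF assms(8)] unfolding differentiable_def by blast
  have "W' (X x, J (X x)) = (J (P' (X x)), P' (X x))"
    using has_derivative_eq_on_sphere[OF has_derivative_compose[OF has_derivative_pt W']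
        has_derivative_Pair[OF J.has_derivative[OF P'] P'] W_sphere x(1) Xx] .
  moreover have "P' (X x) \<bullet> x = - (X x \<bullet> P x)"
    using has_derivative_eq_on_sphere[OF has_derivative_inner[OF P' has_derivative_ident]
        has_derivative_const P_sphere(1) x(1) Xx] by (simp add: inner_commute)
  moreover have "U (pt J x) = (X x, J (X x))"
    using assms(11,13) tau_lift_eq[of x X] x(2) Xx by simp
  ultimately have "LCT1 U W (pt J x) = nu_lift J (\<lambda>_. tanp x (P' (X x))) x
      - (1/2 * (J x \<bullet> X x)) *\<^sub>R nu_lift J (\<lambda>_. Aop J (\<lambda>_. P x) x) x"
    using LCT1_at_hopf_point[OF x(1) Xx P_sphere[OF assms(13)]] smooth_differentiable[OF assms(7)] W'
      W_sphere[OF assms(13)] by simp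
  moreover have "nabla X P x = tanp x (P' (X x))" "Aop J P x = Aop J (\<lambda>_. P x) x"
    by (simp_all add: nabla_def dd_eq_derivative[OF P'] Aop_eq)
  ultimately show ?thesis
    by (simp add: nu_lift_def P_def)
qed

end
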